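(* The fixed point set $\mathrm{Fix}\,R=\{x\in[0,1]:R(x)=x\}$ is an uncountable subset of $[0,1]\setminus\mathscr D$, and its closure $\overline{\mathrm{Fix}\,R}$ is a Cantor set of Lebesgue measure zero with $\overline{\mathrm{Fix}\,R}\setminus\mathrm{Fix}\,R\subset\mathscr D$.
   Context: Define $\rho$ on binary words: for $b=b_1b_2\dots$, $\rho(b)$ is obtained by deleting every digit $b_n=0$ and replacing every $b_n=1$ by $0$ if $n$ is odd and by $1$ if $n$ is even. For $x\in(0,1]$ let $\beta(x)$ be the unique binary expansion of $x$ with infinitely many $1$'s. Define $R:[0,1]\to[0,1]$ by $R(0)=2/3$ and, for $x\in(0,1]$, $R(x)=\sum_{n\ge1}c_n2^{-n}$ where $c=\rho(\beta(x))$. $\mathscr D$ is the set of dyadic rationals in $[0,1]$. *)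

theory Defs
  imports "HOL-Analysis.Analysis"
begin

text \<open>Infinite binary words are sequences b :: nat \<Rightarrow> bool, where b i is the
digit b_(i+1) of the paper (True = 1). Position i (0-based) is odd in the
paper's 1-based numbering iff i is even.\<close>

definition bin_val :: "(nat \<Rightarrow> bool) \<Rightarrow> real" where
  "bin_val b = (\<Sum>n. (if b n then 1 else 0) / 2 ^ (n + 1))"

definition beta :: "real \<Rightarrow> (nat \<Rightarrow> bool)" where
  "beta x = (THE b. infinite {n. b n} \<and> bin_val b = x)"

text \<open>rho on words with infinitely many 1's: the zeros are deleted, and the
k-th remaining 1 (at 1-based position n) becomes 0 if n is odd, 1 if n is even.
With 0-based positions i = n - 1 this is: output digit k is 1 iff the
0-based position of the k-th one is odd.\<close>
definition rho :: "(nat \<Rightarrow> bool) \<Rightarrow> (nat \<Rightarrow> bool)" where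
  "rho b = (\<lambda>k. odd (enumerate {i. b i} k))"

definition R :: "real \<Rightarrow> real" where
  "R x = (if x = 0 then 2 / 3 else bin_val (rho (beta x)))"

definition dyadic :: "real set" where
  "dyadic = {x \<in> {0..1}. \<exists>(k::int) (n::nat). x = real_of_int k / 2 ^ n}"

definition FixR :: "real set" where
  "FixR = {x \<in> {0..1}. R x = x}"

definition cantor_set :: "real set \<Rightarrow> bool" where
  "cantor_set S \<longleftrightarrow> S \<noteq> {} \<and> compact S \<and> (\<forall>x\<in>S. x islimpt S)
     \<and> (\<forall>C. C \<subseteq> S \<longrightarrow> connected C \<longrightarrow> (\<exists>a. C \<subseteq> {a}))"

end

theory Submission
  imports Defs
begin

text \<open>Write a point of (0,1] as x = bin_val b, with b its binary expansion having
infinitely many ones. Then R x = x says rho b = b, which unwinds into a local condition: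
a one at position n, preceded by k ones, needs k < n and b k equal to the parity of n.
This condition rules out a tail of ones, so Fix R misses the dyadics, and it excludes one
of the four two-letter continuations of every admissible prefix, so the closure of Fix R
is covered by 3^k dyadic intervals of length 4^-k and is null. Every admissible prefix
has two distinct admissible infinite continuations, so the closure is perfect and hence
uncountable; and a non-dyadic point of the closure lies inside the dyadic intervals of
all its prefixes, so its own expansion is admissible.\<close>

section \<open>Binary expansions\<close>

definition bin_term :: "(nat \<Rightarrow> bool) \<Rightarrow> nat \<Rightarrow> real" where
  "bin_term b n = (if b n then 1 else 0) / 2 ^ (n + 1)"

lemma bin_val_eq_suminf: "bin_val b = suminf (bin_term b)"
  unfolding bin_val_def bin_term_def ..

lemma bin_term_nonneg: "0 \<le> bin_term b n"
  by (simp add: bin_term_def)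

lemma bin_term_le: "bin_term b n \<le> (1/2) ^ Suc n"
  by (simp add: bin_term_def power_divide)

lemma summable_bin_term: "summable (bin_term b)"
  by (rule summable_comparison_test'[OF sums_summable[OF power_half_series], of 0])
     (simp add: bin_term_def power_divide)

lemma bin_val_nonneg: "0 \<le> bin_val b"
  unfolding bin_val_eq_suminf by (rule suminf_nonneg[OF summable_bin_term bin_term_nonneg])

lemma bin_val_le_1: "bin_val b \<le> 1"
proof -
  have "suminf (bin_term b) \<le> (\<Sum>n. (1/2::real) ^ Suc n)"
    by (rule suminf_le[OF bin_term_le summable_bin_term sums_summable[OF power_half_series]])
  then show ?thesis
    using power_half_series sums_unique bin_val_eq_suminf by metis
qed

lemma bin_val_pos: "b i \<Longrightarrow> 0 < bin_val b"
  unfolding bin_val_eq_suminf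
  by (rule suminf_pos2[OF summable_bin_term bin_term_nonneg]) (simp add: bin_term_def)

lemma bin_val_less_1:
  assumes "\<not> b i" shows "bin_val b < 1"
proof -
  have half: "summable (\<lambda>n. (1/2::real) ^ Suc n)"
    by (rule sums_summable[OF power_half_series])
  have "0 < (\<Sum>n. (1/2::real) ^ Suc n - bin_term b n)"
    by (rule suminf_pos2[OF summable_diff[OF half summable_bin_term[of b]], of i])
       (use assms bin_term_le in \<open>auto simp: bin_term_def\<close>)
  also have "\<dots> = 1 - bin_val b"
    using suminf_diff[OF half summable_bin_term] power_half_series sums_unique bin_val_eq_suminf
    by metis
  finally show ?thesis by simp
qed

definition word_val :: "bool list \<Rightarrow> real" where
  "word_val w = (\<Sum>i<length w. (if w ! i then 1 else 0) / 2 ^ (i + 1))"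

definition init_word :: "(nat \<Rightarrow> bool) \<Rightarrow> nat \<Rightarrow> bool list" where
  "init_word b n = map b [0..<n]"

lemma length_init_word [simp]: "length (init_word b n) = n"
  by (simp add: init_word_def)

lemma init_word_eq_Nil_iff [simp]: "init_word b n = [] \<longleftrightarrow> n = 0"
  by (simp add: init_word_def)

lemma nth_init_word [simp]: "i < n \<Longrightarrow> init_word b n ! i = b i"
  by (simp add: init_word_def)

lemma init_word_Suc: "init_word b (Suc n) = init_word b n @ [b n]"
  by (simp add: init_word_def)

lemma word_val_init_word: "word_val (init_word b n) = (\<Sum>i<n. bin_term b i)"
  by (simp add: word_val_def bin_term_def)

lemma word_val_snoc:
  "word_val (w @ [a]) = word_val w + (if a then 1 else 0) / 2 ^ (length w + 1)"
  by (simp add: word_val_def nth_append)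

lemma word_val_scaled_in_Ints: "word_val w * 2 ^ length w \<in> \<int>"
proof (induction w rule: rev_induct)
  case (snoc a w)
  have "word_val (w @ [a]) * 2 ^ length (w @ [a])
        = 2 * (word_val w * 2 ^ length w) + (if a then 1 else 0)"
    by (simp add: word_val_snoc field_simps)
  then show ?case using snoc by simp
qed (simp add: word_val_def)

lemma word_val_dist_ge:
  "length w = length w' \<Longrightarrow> w \<noteq> w' \<Longrightarrow> 1 / 2 ^ length w \<le> \<bar>word_val w - word_val w'\<bar>"
proof (induction w arbitrary: w' rule: rev_induct)
  case (snoc a w)
  obtain w'' a' where w': "w' = w'' @ [a']"
    using snoc.prems by (cases w' rule: rev_exhaust) auto
  have len: "length w'' = length w" using snoc.prems w' by simp
  show ?case
  proof (cases "w = w''")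
    case True
    then show ?thesis using snoc.prems w' by (auto simp: word_val_snoc)
  next
    case False
    have "1 / 2 ^ length w \<le> \<bar>word_val w - word_val w''\<bar>"
      using snoc.IH[OF len[symmetric] False] .
    moreover have "\<bar>(if a then 1 else 0) / 2 ^ (length w + 1)
        - (if a' then 1 else 0) / 2 ^ (length w + 1)\<bar> \<le> (1::real) / 2 ^ (length w + 1)"
      by (cases a; cases a') simp_all
    moreover have "(1::real) / 2 ^ (length w + 1) = 1 / 2 ^ length w - 1 / 2 ^ (length w + 1)"
      by (simp add: field_simps)
    ultimately show ?thesis using w' len by (simp add: word_val_snoc)
  qed
qed simp

lemma bin_val_split:
  "bin_val b = word_val (init_word b n) + bin_val (\<lambda>i. b (i + n)) / 2 ^ n"
proof -
  have "(\<Sum>i. bin_term b (i + n)) = bin_val (\<lambda>i. b (i + n)) / 2 ^ n"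
    unfolding bin_val_eq_suminf
    by (subst suminf_divide[OF summable_bin_term, symmetric])
       (simp add: bin_term_def power_add field_simps)
  then show ?thesis
    using suminf_split_initial_segment[OF summable_bin_term, of b n]
    by (simp add: bin_val_eq_suminf word_val_init_word)
qed

lemma bin_val_init_word_bounds:
  "word_val (init_word b n) \<le> bin_val b" "bin_val b \<le> word_val (init_word b n) + 1 / 2 ^ n"
  using bin_val_split[of b n] bin_val_nonneg[of "\<lambda>i. b (i + n)"] bin_val_le_1[of "\<lambda>i. b (i + n)"]
  by (auto simp: divide_right_mono)

lemma word_val_init_word_less:
  assumes "infinite {i. b i}" shows "word_val (init_word b n) < bin_val b"
proof -
  obtain i where "n \<le> i" "b i"
    using assms unfolding infinite_nat_iff_unbounded_le by blast
  then have "0 < bin_val (\<lambda>i. b (i + n))" by (intro bin_val_pos[of "\<lambda>i. b (i + n)" "i - n"]) simp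
  then show ?thesis using bin_val_split[of b n] by simp
qed

lemma init_word_eq_if_close:
  assumes "\<bar>word_val (init_word b n) - word_val (init_word c n)\<bar> < 1 / 2 ^ n"
  shows "init_word b n = init_word c n"
  using word_val_dist_ge[of "init_word b n" "init_word c n"] assms by force

lemma bin_val_inj:
  assumes "infinite {i. b i}" "infinite {i. c i}" "bin_val b = bin_val c"
  shows "b = c"
proof
  fix i
  have "init_word b (Suc i) = init_word c (Suc i)"
    using bin_val_init_word_bounds[of b "Suc i"] bin_val_init_word_bounds[of c "Suc i"]
      word_val_init_word_less[OF assms(1), of "Suc i"]
      word_val_init_word_less[OF assms(2), of "Suc i"] assms(3)
    by (intro init_word_eq_if_close) (simp add: abs_less_iff)
  then show "b i = c i" by (metis lessI nth_init_word)
qed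

lemma bin_val_zero_tail:
  assumes "\<forall>i\<ge>N. \<not> b i" shows "bin_val b = word_val (init_word b N)"
proof -
  have "bin_val (\<lambda>i. b (i + N)) = 0" by (simp add: assms bin_val_def)
  then show ?thesis using bin_val_split[of b N] by simp
qed

lemma finite_ones_bin_val_dyadic:
  assumes "finite {i. b i}" obtains k N where "bin_val b = real_of_int k / 2 ^ N"
proof -
  obtain N where "\<forall>i\<ge>N. \<not> b i"
    using assms by (metis finite_nat_set_iff_bounded_le mem_Collect_eq not_less_eq_eq)
  then have "bin_val b = word_val (init_word b N)" by (rule bin_val_zero_tail)
  moreover obtain k where "word_val (init_word b N) * 2 ^ N = real_of_int k"
    using word_val_scaled_in_Ints[of "init_word b N"] by (auto elim: Ints_cases)
  ultimately show ?thesis using that[of k N] by (simp add: field_simps)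
qed

lemma ceiling_dyadic_tendsto:
  fixes x :: real
  shows "(\<lambda>N. real_of_int (\<lceil>2 ^ N * x\<rceil> - 1) / 2 ^ N) \<longlonglongrightarrow> x"
proof (rule tendsto_sandwich[of "\<lambda>N. x - (1/2) ^ N" _ _ "\<lambda>N. x"])
  have "x - (1/2) ^ N \<le> real_of_int (\<lceil>2 ^ N * x\<rceil> - 1) / 2 ^ N" for N
  proof -
    have "2 ^ N * x \<le> real_of_int (\<lceil>2 ^ N * x\<rceil> - 1) + 1" by linarith
    then have "x \<le> (real_of_int (\<lceil>2 ^ N * x\<rceil> - 1) + 1) / 2 ^ N"
      by (simp add: pos_le_divide_eq mult.commute)
    then show ?thesis unfolding power_divide add_divide_distrib by simp
  qed
  then show "\<forall>\<^sub>F N in sequentially. x - (1/2) ^ N \<le> real_of_int (\<lceil>2 ^ N * x\<rceil> - 1) / 2 ^ N"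
    by (intro always_eventually) blast
  have "real_of_int (\<lceil>2 ^ N * x\<rceil> - 1) < 2 ^ N * x" for N by linarith
  then show "\<forall>\<^sub>F N in sequentially. real_of_int (\<lceil>2 ^ N * x\<rceil> - 1) / 2 ^ N \<le> x"
    by (auto simp: field_simps less_imp_le)
  show "(\<lambda>N. x - (1/2::real) ^ N) \<longlonglongrightarrow> x"
    by (intro tendsto_eq_intros LIMSEQ_power_zero) auto
qed auto

text \<open>The digits are those of a_N = \<lceil>2^N x\<rceil> - 1; taking the ceiling rather than the
floor is what produces the expansion with infinitely many ones.\<close>

lemma binary_expansion_exists:
  fixes x :: real assumes x: "0 < x" "x \<le> 1"
  obtains b where "infinite {i. b i}" "bin_val b = x"
proof -
  define a where "a N = \<lceil>2 ^ N * x\<rceil> - 1" for N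
  have a_less: "real_of_int (a N) < 2 ^ N * x" for N unfolding a_def by linarith
  have a_Suc: "a (Suc N) = 2 * a N \<or> a (Suc N) = 2 * a N + 1" for N
  proof -
    have "real_of_int (a (Suc N)) < 2 * real_of_int (a N) + 2"
         "2 * real_of_int (a N) < real_of_int (a (Suc N)) + 1"
      unfolding a_def by (simp_all add: mult.assoc) linarith+
    then show ?thesis by linarith
  qed
  define b where "b n = odd (a (Suc n))" for n
  have partial_sums: "(\<Sum>i<N. bin_term b i) = a N / 2 ^ N" for N
  proof (induction N)
    case 0
    have "a 0 = 0" using x unfolding a_def by simp linarith
    then show ?case by simp
  next
    case (Suc N)
    have "real_of_int (a (Suc N)) = 2 * a N + (if b N then 1 else 0)"
      using a_Suc[of N] unfolding b_def by auto
    with Suc show ?case by (simp add: bin_term_def field_simps)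
  qed
  have "bin_term b sums x"
    using ceiling_dyadic_tendsto[of x] unfolding sums_def partial_sums a_def .
  then have val: "bin_val b = x" using bin_val_eq_suminf sums_unique by metis
  have "infinite {i. b i}"
  proof
    assume "finite {i. b i}"
    then obtain N where "\<forall>i\<ge>N. \<not> b i"
      by (metis finite_nat_set_iff_bounded_le mem_Collect_eq not_less_eq_eq)
    then have "x = a N / 2 ^ N"
      using bin_val_zero_tail val partial_sums word_val_init_word by metis
    then show False using a_less[of N] by (simp add: field_simps)
  qed
  with val show ?thesis using that by blast
qed

lemma beta_bin_val:
  assumes "infinite {i. b i}" shows "beta (bin_val b) = b"
  unfolding beta_def by (rule the_equality) (use assms bin_val_inj in auto)

lemma beta:
  assumes "0 < x" "x \<le> 1"
  shows "infinite {i. beta x i}" "bin_val (beta x) = x"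
  using binary_expansion_exists[OF assms] beta_bin_val by metis+

lemma eventually_ones_if_dyadic:
  assumes ones: "infinite {i. b i}" and dyadic: "bin_val b = real_of_int k / 2 ^ N"
  shows "\<forall>i\<ge>N. b i"
proof -
  define t where "t = bin_val (\<lambda>i. b (i + N))"
  obtain i where "N \<le> i" "b i"
    using ones unfolding infinite_nat_iff_unbounded_le by blast
  then have "0 < t" unfolding t_def by (intro bin_val_pos[of "\<lambda>i. b (i + N)" "i - N"]) simp
  have "t = real_of_int k - word_val (init_word b N) * 2 ^ N"
    using bin_val_split[of b N] dyadic unfolding t_def by (simp add: field_simps)
  then have "t \<in> \<int>" using word_val_scaled_in_Ints[of "init_word b N"] by simp
  then obtain m where m: "t = real_of_int m" by (auto elim: Ints_cases)
  moreover have "t \<le> 1" unfolding t_def by (rule bin_val_le_1)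
  ultimately have "0 < m" "m \<le> 1" using \<open>0 < t\<close> by simp_all
  then have "t = 1" using m by simp
  show ?thesis
  proof (intro allI impI)
    fix j assume "N \<le> j"
    with \<open>t = 1\<close> show "b j"
      using bin_val_less_1[of "\<lambda>i. b (i + N)" "j - N"] unfolding t_def by auto
  qed
qed

section \<open>Fixed points of R as admissible words\<close>

definition ones_before :: "(nat \<Rightarrow> bool) \<Rightarrow> nat \<Rightarrow> nat" where
  "ones_before b n = card {i. i < n \<and> b i}"

text \<open>A one at position n is the (ones_before b n)-th one of b (counting from 0), so
rho b = b requires the parity clause. The bound ones_before b n < n, automatic once b 0 is
zero, makes the condition depend only on the letters before n.\<close>

definition admissible_at :: "(nat \<Rightarrow> bool) \<Rightarrow> nat \<Rightarrow> bool" where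
  "admissible_at b n \<longleftrightarrow> (b n \<longrightarrow> ones_before b n < n \<and> b (ones_before b n) = odd n)"

definition admissible :: "(nat \<Rightarrow> bool) \<Rightarrow> bool" where
  "admissible b \<longleftrightarrow> (\<forall>n. admissible_at b n)"

definition fixed_words :: "(nat \<Rightarrow> bool) set" where
  "fixed_words = {b. infinite {i. b i} \<and> admissible b}"

lemma ones_before_cong: "(\<And>i. i < n \<Longrightarrow> b i = c i) \<Longrightarrow> ones_before b n = ones_before c n"
  unfolding ones_before_def by (rule arg_cong[where f = card]) auto

lemma admissible_at_cong:
  assumes "\<And>i. i \<le> n \<Longrightarrow> b i = c i" shows "admissible_at b n = admissible_at c n"
proof -
  have "ones_before b n = ones_before c n" using assms by (intro ones_before_cong) auto
  moreover have "b n = c n" using assms by simp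
  moreover have "b k = c k" if "k < n" for k using assms that by simp
  ultimately show ?thesis unfolding admissible_at_def by metis
qed

lemma ones_before_Suc: "ones_before b (Suc n) = ones_before b n + (if b n then 1 else 0)"
proof -
  have "{i. i < Suc n \<and> b i} = (if b n then insert n {i. i < n \<and> b i} else {i. i < n \<and> b i})"
    by (auto simp: less_Suc_eq)
  then show ?thesis unfolding ones_before_def by simp
qed

lemma ones_before_less: "\<not> b 0 \<Longrightarrow> 0 < n \<Longrightarrow> ones_before b n < n"
proof -
  assume "\<not> b 0" "0 < n"
  then have "{i. i < n \<and> b i} \<subseteq> {1..<n}" by (auto simp: Suc_le_eq intro!: gr0I)
  then have "ones_before b n \<le> n - 1"
    unfolding ones_before_def by (metis card_atLeastLessThan card_mono finite_atLeastLessThan)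
  with \<open>0 < n\<close> show ?thesis by linarith
qed

lemma ones_before_enumerate:
  assumes ones: "infinite {i. b i}" shows "ones_before b (enumerate {i. b i} k) = k"
proof -
  let ?e = "enumerate {i. b i}"
  have "{i. i < ?e k \<and> b i} = ?e ` {..<k}"
  proof
    show "{i. i < ?e k \<and> b i} \<subseteq> ?e ` {..<k}"
    proof
      fix i assume i: "i \<in> {i. i < ?e k \<and> b i}"
      then obtain j where "?e j = i" using enumerate_Ex[OF ones] by auto
      with i show "i \<in> ?e ` {..<k}" using ones by auto
    qed
    show "?e ` {..<k} \<subseteq> {i. i < ?e k \<and> b i}"
      using ones enumerate_in_set[OF ones] by auto
  qed
  then show ?thesis
    unfolding ones_before_def by (simp add: card_image inj_on_subset[OF inj_enumerate[OF ones]])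
qed

lemma rho_eq_self_iff_admissible:
  assumes ones: "infinite {i. b i}" shows "rho b = b \<longleftrightarrow> admissible b"
proof
  let ?e = "enumerate {i. b i}"
  assume fixed: "rho b = b"
  have "\<not> b 0"
  proof
    assume "b 0"
    then have "rho b 0 = False" by (simp add: rho_def enumerate_0 Least_eq_0)
    with fixed \<open>b 0\<close> show False by simp
  qed
  show "admissible b" unfolding admissible_def admissible_at_def
  proof (intro allI impI conjI)
    fix n assume "b n"
    then obtain k where k: "?e k = n" using enumerate_Ex[OF ones] by auto
    then have "ones_before b n = k" using ones_before_enumerate[OF ones] by blast
    moreover have "rho b k = odd n" using k by (simp add: rho_def)
    ultimately show "b (ones_before b n) = odd n" using fixed by simp
    show "ones_before b n < n"
      using ones_before_less[of b n] \<open>b n\<close> \<open>\<not> b 0\<close> by (cases n) auto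
  qed
next
  assume adm: "admissible b"
  show "rho b = b"
  proof
    fix k
    define n where "n = enumerate {i. b i} k"
    have "b n" using enumerate_in_set[OF ones] n_def by auto
    moreover have "ones_before b n = k" using ones_before_enumerate[OF ones] n_def by simp
    ultimately have "b k = odd n" using adm unfolding admissible_def admissible_at_def by metis
    then show "rho b k = b k" by (simp add: rho_def n_def)
  qed
qed

text \<open>The ones at n and n + 1 are preceded by consecutive counts k and k + 1; once k
exceeds N, the letters b k and b (k + 1) are both ones, yet they record the different
parities of n and n + 1.\<close>

lemma admissible_not_eventually_ones:
  assumes "admissible b" shows "\<not> (\<forall>i\<ge>N. b i)"
proof
  assume ones: "\<forall>i\<ge>N. b i"
  define n where "n = 2 * N"
  have "card {N..<n} \<le> ones_before b n"
    unfolding ones_before_def by (rule card_mono) (use ones in auto)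
  then have "n - N \<le> ones_before b n" by simp
  then have "N \<le> ones_before b n" by (simp add: n_def)
  moreover have "b n" "b (Suc n)" using ones n_def by auto
  moreover have "b (ones_before b n) = odd n" "b (ones_before b (Suc n)) = odd (Suc n)"
    using assms \<open>b n\<close> \<open>b (Suc n)\<close> unfolding admissible_def admissible_at_def by blast+
  ultimately show False using ones by (auto simp: ones_before_Suc)
qed

lemma infinite_rho_if_eventually_ones:
  assumes ones: "\<forall>i\<ge>N. b i" shows "infinite {k. rho b k}"
proof
  let ?e = "enumerate {i. b i}"
  assume "finite {k. rho b k}"
  have inf: "infinite {i. b i}"
    using ones by (intro infinite_super[OF _ infinite_Ici[of N]]) auto
  have "{n. N \<le> n \<and> odd n} \<subseteq> ?e ` {k. rho b k}"
  proof
    fix n assume n: "n \<in> {n. N \<le> n \<and> odd n}"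
    then obtain j where "?e j = n" using ones enumerate_Ex[OF inf] by auto
    with n show "n \<in> ?e ` {k. rho b k}" by (auto simp: rho_def)
  qed
  moreover have "infinite {n. N \<le> n \<and> odd n}"
  proof (rule infinite_super)
    show "range (\<lambda>m. 2 * (N + m) + 1) \<subseteq> {n. N \<le> n \<and> odd n}" by auto
    show "infinite (range (\<lambda>m::nat. 2 * (N + m) + 1))"
      by (rule range_inj_infinite) (auto simp: inj_on_def)
  qed
  ultimately show False using \<open>finite {k. rho b k}\<close> by (metis finite_imageI infinite_super)
qed

lemma bin_val_fixed_word_in_FixR:
  assumes "b \<in> fixed_words" shows "bin_val b \<in> FixR"
proof -
  have ones: "infinite {i. b i}" and "admissible b"
    using assms by (auto simp: fixed_words_def)
  then obtain i where "b i" using not_finite_existsD by blast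
  then have "0 < bin_val b" by (rule bin_val_pos)
  then have "R (bin_val b) = bin_val (rho b)" by (simp add: R_def beta_bin_val[OF ones])
  also have "rho b = b" using rho_eq_self_iff_admissible[OF ones] \<open>admissible b\<close> by blast
  finally show ?thesis using bin_val_nonneg bin_val_le_1 by (simp add: FixR_def)
qed

lemma beta_in_fixed_words:
  assumes "x \<in> FixR" shows "beta x \<in> fixed_words" "bin_val (beta x) = x"
proof -
  have "0 \<le> x" "x \<le> 1" "R x = x" using assms by (auto simp: FixR_def)
  moreover have "x \<noteq> 0" using \<open>R x = x\<close> by (auto simp: R_def)
  ultimately have "0 < x" by simp
  define b where "b = beta x"
  have ones: "infinite {i. b i}" and val: "bin_val b = x"
    using beta[OF \<open>0 < x\<close> \<open>x \<le> 1\<close>] by (simp_all add: b_def)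
  have rho_val: "bin_val (rho b) = x"
    using \<open>R x = x\<close> \<open>0 < x\<close> by (simp add: R_def b_def)
  have "infinite {k. rho b k}"
  proof
    assume "finite {k. rho b k}"
    then obtain k N where "bin_val (rho b) = real_of_int k / 2 ^ N"
      by (rule finite_ones_bin_val_dyadic)
    then have "\<forall>i\<ge>N. b i"
      using rho_val val by (intro eventually_ones_if_dyadic[OF ones]) simp
    then show False using \<open>finite {k. rho b k}\<close> infinite_rho_if_eventually_ones by blast
  qed
  then have "rho b = b" by (rule bin_val_inj[OF _ ones]) (simp add: rho_val val)
  then show "beta x \<in> fixed_words" "bin_val (beta x) = x"
    using rho_eq_self_iff_admissible[OF ones] ones val by (simp_all add: fixed_words_def b_def)
qed

lemma FixR_eq_bin_val_fixed_words: "FixR = bin_val ` fixed_words"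
  using bin_val_fixed_word_in_FixR beta_in_fixed_words by (metis image_subset_iff subsetI
      subset_antisym image_eqI)

lemma FixR_disjoint_dyadic: "FixR \<inter> dyadic = {}"
proof -
  have "bin_val b \<notin> dyadic" if b: "b \<in> fixed_words" for b
  proof
    assume "bin_val b \<in> dyadic"
    then obtain k N where "bin_val b = real_of_int k / 2 ^ N" by (auto simp: dyadic_def)
    then have "\<forall>i\<ge>N. b i" using b eventually_ones_if_dyadic by (auto simp: fixed_words_def)
    with b show False using admissible_not_eventually_ones by (auto simp: fixed_words_def)
  qed
  then show ?thesis unfolding FixR_eq_bin_val_fixed_words by blast
qed

section \<open>Admissible finite words\<close>

definition admissible_word :: "bool list \<Rightarrow> bool" where
  "admissible_word w \<longleftrightarrow> (\<forall>n<length w. admissible_at (\<lambda>i. w ! i) n)"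

definition one_allowed :: "bool list \<Rightarrow> bool" where
  "one_allowed w \<longleftrightarrow> ones_before (\<lambda>i. w ! i) (length w) < length w
     \<and> w ! ones_before (\<lambda>i. w ! i) (length w) = odd (length w)"

lemma one_allowed_init_word:
  "one_allowed (init_word b n) \<longleftrightarrow> ones_before b n < n \<and> b (ones_before b n) = odd n"
proof -
  have "ones_before (\<lambda>i. init_word b n ! i) n = ones_before b n"
    by (rule ones_before_cong) simp
  then show ?thesis unfolding one_allowed_def by auto
qed

lemma admissible_at_iff_one_allowed:
  "admissible_at b n \<longleftrightarrow> (b n \<longrightarrow> one_allowed (init_word b n))"
  by (simp add: admissible_at_def one_allowed_init_word)

lemma admissible_word_init_word: "admissible_word (init_word b n) \<longleftrightarrow> (\<forall>i<n. admissible_at b i)"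
proof -
  have "admissible_at (\<lambda>j. init_word b n ! j) i = admissible_at b i" if "i < n" for i
    by (rule admissible_at_cong) (use that in simp)
  then show ?thesis unfolding admissible_word_def by auto
qed

lemma init_word_nth_take: "n \<le> length w \<Longrightarrow> init_word (\<lambda>i. w ! i) n = take n w"
  by (rule nth_equalityI) auto

lemma admissible_word_snoc:
  "admissible_word (w @ [a]) \<longleftrightarrow> admissible_word w \<and> (a \<longrightarrow> one_allowed w)"
proof -
  define f where "f i = (w @ [a]) ! i" for i
  have w: "init_word f (length w) = w" and wa: "init_word f (Suc (length w)) = w @ [a]"
    using init_word_nth_take[of _ "w @ [a]"] by (simp_all add: f_def[abs_def])
  have "admissible_word (init_word f (Suc (length w)))
        \<longleftrightarrow> admissible_word (init_word f (length w)) \<and> admissible_at f (length w)"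
    unfolding admissible_word_init_word by (auto simp: less_Suc_eq)
  moreover have "admissible_at f (length w) \<longleftrightarrow> (a \<longrightarrow> one_allowed w)"
    unfolding admissible_at_iff_one_allowed w by (simp add: f_def)
  ultimately show ?thesis using w wa by simp
qed

lemma admissible_word_Nil: "admissible_word []"
  by (simp add: admissible_word_def)

lemma one_allowed_snoc_False_iff:
  "one_allowed (w @ [False]) \<longleftrightarrow> ones_before (\<lambda>i. w ! i) (length w) < Suc (length w)
     \<and> (w @ [False]) ! ones_before (\<lambda>i. w ! i) (length w) = even (length w)"
proof -
  define f where "f i = (w @ [False]) ! i" for i
  have "init_word f (Suc (length w)) = w @ [False]"
    using init_word_nth_take[of _ "w @ [False]"] by (simp add: f_def[abs_def])
  moreover have "ones_before f (Suc (length w)) = ones_before f (length w)"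
    by (simp add: ones_before_Suc f_def)
  moreover have "ones_before f (length w) = ones_before (\<lambda>i. w ! i) (length w)"
    by (rule ones_before_cong) (simp add: f_def nth_append)
  ultimately show ?thesis using one_allowed_init_word[of f "Suc (length w)"]
    by (simp add: f_def)
qed

text \<open>Appending a zero does not change the count of ones but flips the parity of the
length, so the letter that would have to record it cannot serve both times.\<close>

lemma not_one_allowed_both: "\<not> (one_allowed w \<and> one_allowed (w @ [False]))"
  unfolding one_allowed_snoc_False_iff unfolding one_allowed_def by (auto simp: nth_append)

lemma admissible_word_hd: "admissible_word w \<Longrightarrow> w \<noteq> [] \<Longrightarrow> \<not> w ! 0"
  unfolding admissible_word_def admissible_at_def by auto

lemma one_allowed_or_snoc_False:
  assumes "admissible_word w" "w \<noteq> []"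
  shows "one_allowed w \<or> one_allowed (w @ [False])"
proof -
  have "\<not> (\<lambda>i. w ! i) 0" using admissible_word_hd[OF assms] by simp
  then have "ones_before (\<lambda>i. w ! i) (length w) < length w"
    using assms(2) by (intro ones_before_less) auto
  then show ?thesis
    unfolding one_allowed_snoc_False_iff unfolding one_allowed_def by (auto simp: nth_append)
qed

fun greedy_list :: "bool list \<Rightarrow> nat \<Rightarrow> bool list" where
  "greedy_list v 0 = v"
| "greedy_list v (Suc k) = greedy_list v k @ [one_allowed (greedy_list v k)]"

definition greedy_word :: "bool list \<Rightarrow> nat \<Rightarrow> bool" where
  "greedy_word v i = greedy_list v (Suc i) ! i"

lemma length_greedy_list [simp]: "length (greedy_list v k) = length v + k"
  by (induction k) auto

lemma greedy_list_nth_mono: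
  "k \<le> k' \<Longrightarrow> i < length v + k \<Longrightarrow> greedy_list v k' ! i = greedy_list v k ! i"
  by (induction k' rule: dec_induct) (simp_all add: nth_append)

lemma greedy_word_eq_nth: "i < length v + k \<Longrightarrow> greedy_word v i = greedy_list v k ! i"
  unfolding greedy_word_def
  by (metis greedy_list_nth_mono add_Suc_right le_add2 less_Suc_eq_le nat_le_linear
      not_less_eq_eq trans_le_add2)

lemma init_word_greedy_word: "init_word (greedy_word v) (length v + k) = greedy_list v k"
  by (rule nth_equalityI) (simp_all add: greedy_word_eq_nth)

lemma greedy_word_low: "i < length v \<Longrightarrow> greedy_word v i = v ! i"
  using greedy_word_eq_nth[of i v 0] by simp

lemma greedy_word_high:
  "greedy_word v (length v + k) = one_allowed (init_word (greedy_word v) (length v + k))"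
  using greedy_word_eq_nth[of "length v + k" v "Suc k"]
  by (simp add: init_word_greedy_word nth_append)

lemma admissible_greedy_word:
  assumes "admissible_word v" shows "admissible (greedy_word v)"
  unfolding admissible_def
proof
  fix n
  show "admissible_at (greedy_word v) n"
  proof (cases "n < length v")
    case True
    have "admissible_at (greedy_word v) n = admissible_at (\<lambda>i. v ! i) n"
      by (rule admissible_at_cong) (use True in \<open>simp add: greedy_word_low\<close>)
    with True assms show ?thesis by (simp add: admissible_word_def)
  next
    case False
    then obtain k where "n = length v + k" by (metis le_Suc_ex not_less)
    then show ?thesis using greedy_word_high admissible_at_iff_one_allowed by metis
  qed
qed

lemma infinite_ones_greedy_word:
  assumes "admissible_word v" "v \<noteq> []" shows "infinite {i. greedy_word v i}"
  unfolding infinite_nat_iff_unbounded_le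
proof
  fix m
  define i where "i = length v + m"
  let ?w = "init_word (greedy_word v) i"
  have "admissible_word ?w"
    using admissible_greedy_word[OF assms(1)] by (simp add: admissible_word_init_word admissible_def)
  moreover have "?w \<noteq> []" using assms(2) by (simp add: i_def)
  ultimately have "one_allowed ?w \<or> one_allowed (?w @ [False])"
    by (rule one_allowed_or_snoc_False)
  moreover have "greedy_word v i = one_allowed ?w" using greedy_word_high i_def by simp
  moreover have "greedy_word v (Suc i) = one_allowed (init_word (greedy_word v) (Suc i))"
    using greedy_word_high[of v "Suc m"] i_def by simp
  ultimately have "greedy_word v i \<or> greedy_word v (Suc i)"
    by (cases "greedy_word v i") (simp_all add: init_word_Suc)
  then show "\<exists>n\<ge>m. n \<in> {i. greedy_word v i}"
    using i_def by (metis le_add2 le_Suc_eq mem_Collect_eq)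
qed

lemma greedy_word_in_fixed_words:
  "admissible_word v \<Longrightarrow> v \<noteq> [] \<Longrightarrow> greedy_word v \<in> fixed_words"
  using admissible_greedy_word infinite_ones_greedy_word by (simp add: fixed_words_def)

lemma init_word_greedy_word_append: "init_word (greedy_word (w @ u)) (length w) = w"
  by (rule nth_equalityI) (simp_all add: greedy_word_low nth_append)

lemma greedy_word_snoc_False_neq:
  assumes "one_allowed v" shows "greedy_word v \<noteq> greedy_word (v @ [False])"
proof -
  have "greedy_word v (length v)"
    using greedy_word_high[of v 0] init_word_greedy_word[of v 0] assms by simp
  moreover have "\<not> greedy_word (v @ [False]) (length v)" by (simp add: greedy_word_low)
  ultimately show ?thesis by metis
qed

text \<open>Whichever of w and w @ [False] allows a one, its greedy continuation and that of the
same word followed by a zero are two distinct fixed words extending w.\<close>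

lemma two_fixed_words_extending:
  assumes "admissible_word w" "w \<noteq> []"
  obtains c c' where "c \<in> fixed_words" "c' \<in> fixed_words" "c \<noteq> c'"
    "init_word c (length w) = w" "init_word c' (length w) = w"
proof -
  note extending = that
  have split: thesis if "one_allowed u" "admissible_word u" "u = w @ t" for u t
  proof (rule extending)
    have "admissible_word (u @ [False])"
      using \<open>admissible_word u\<close> admissible_word_snoc[of u False] by simp
    moreover have "u \<noteq> []" using \<open>u = w @ t\<close> assms(2) by simp
    ultimately show "greedy_word u \<in> fixed_words" "greedy_word (u @ [False]) \<in> fixed_words"
      using \<open>admissible_word u\<close> by (simp_all add: greedy_word_in_fixed_words)
    show "greedy_word u \<noteq> greedy_word (u @ [False])"
      using \<open>one_allowed u\<close> by (rule greedy_word_snoc_False_neq)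
    show "init_word (greedy_word u) (length w) = w"
      "init_word (greedy_word (u @ [False])) (length w) = w"
      using init_word_greedy_word_append[of w t] init_word_greedy_word_append[of w "t @ [False]"]
        \<open>u = w @ t\<close> by simp_all
  qed
  consider "one_allowed w" | "one_allowed (w @ [False])"
    using one_allowed_or_snoc_False[OF assms] by blast
  then show ?thesis
  proof cases
    case 1
    then show ?thesis using split[of w "[]"] assms(1) by simp
  next
    case 2
    then show ?thesis using split[of "w @ [False]" "[False]"] assms(1)
      by (simp add: admissible_word_snoc)
  qed
qed

lemma fixed_words_nonempty: "fixed_words \<noteq> {}"
  using greedy_word_in_fixed_words[of "[False]"] admissible_word_snoc[of "[]" False]
  by (auto simp: admissible_word_Nil)

section \<open>The closure of Fix R is a null set\<close>

definition admissible_words :: "nat \<Rightarrow> bool list set" where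
  "admissible_words n = {w. length w = n \<and> admissible_word w}"

lemma finite_admissible_words: "finite (admissible_words n)"
proof -
  have "finite {w. set w \<subseteq> (UNIV :: bool set) \<and> length w = n}"
    by (rule finite_lists_length_eq) simp
  then show ?thesis by (rule finite_subset[rotated]) (auto simp: admissible_words_def)
qed

lemma init_word_in_admissible_words: "b \<in> fixed_words \<Longrightarrow> init_word b n \<in> admissible_words n"
  by (simp add: admissible_words_def admissible_word_init_word fixed_words_def admissible_def)

definition two_letter_exts :: "bool list \<Rightarrow> bool list set" where
  "two_letter_exts w = (\<lambda>t. w @ t) ` set (if one_allowed w
     then [[False, False], [True, False], [True, True]] else [[False, False], [False, True]])"

lemma card_two_letter_exts: "card (two_letter_exts w) \<le> 3"
proof -
  let ?ts = "if one_allowed w then [[False, False], [True, False], [True, True]]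
    else [[False, False], [False, True]]"
  have "card (two_letter_exts w) \<le> card (set ?ts)"
    unfolding two_letter_exts_def by (rule card_image_le) simp
  also have "\<dots> \<le> length ?ts" by (rule card_length)
  finally show ?thesis by (simp split: if_split_asm)
qed

lemma admissible_words_Suc_Suc_subset:
  "admissible_words (Suc (Suc n)) \<subseteq> (\<Union>w\<in>admissible_words n. two_letter_exts w)"
proof
  fix u assume "u \<in> admissible_words (Suc (Suc n))"
  then have len: "length u = Suc (Suc n)" and adm: "admissible_word u"
    by (auto simp: admissible_words_def)
  obtain w a c where u: "u = w @ [a, c]"
    using len by (cases u rule: rev_exhaust; cases "butlast u" rule: rev_exhaust) auto
  have "admissible_word (w @ [a])" and c: "c \<longrightarrow> one_allowed (w @ [a])"
    using adm admissible_word_snoc[of "w @ [a]" c] by (simp_all add: u)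
  then have "admissible_word w" and a: "a \<longrightarrow> one_allowed w"
    using admissible_word_snoc[of w a] by simp_all
  have "u \<in> two_letter_exts w"
  proof (cases "one_allowed w")
    case True
    then have "\<not> (\<not> a \<and> c)" using c not_one_allowed_both[of w] by auto
    with True show ?thesis unfolding two_letter_exts_def u by (cases a; cases c) auto
  next
    case False
    with a show ?thesis unfolding two_letter_exts_def u by (cases a; cases c) auto
  qed
  moreover have "w \<in> admissible_words n"
    using len \<open>admissible_word w\<close> by (simp add: admissible_words_def u)
  ultimately show "u \<in> (\<Union>w\<in>admissible_words n. two_letter_exts w)" by blast
qed

lemma card_admissible_words_even: "card (admissible_words (2 * k)) \<le> 3 ^ k"
proof (induction k)
  case 0
  have "admissible_words 0 = {[]}" by (auto simp: admissible_words_def admissible_word_Nil)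
  then show ?case by simp
next
  case (Suc k)
  have "card (admissible_words (2 * Suc k))
        \<le> card (\<Union>w\<in>admissible_words (2 * k). two_letter_exts w)"
    using admissible_words_Suc_Suc_subset[of "2 * k"]
    by (intro card_mono) (auto simp: finite_admissible_words two_letter_exts_def)
  also have "\<dots> \<le> (\<Sum>w\<in>admissible_words (2 * k). card (two_letter_exts w))"
    by (rule card_UN_le[OF finite_admissible_words])
  also have "\<dots> \<le> 3 * card (admissible_words (2 * k))"
    using sum_mono[of "admissible_words (2 * k)" "\<lambda>w. card (two_letter_exts w)" "\<lambda>_. 3"]
      card_two_letter_exts by simp
  also have "\<dots> \<le> 3 ^ Suc k" using Suc by simp
  finally show ?case .
qed

definition dyadic_cover :: "nat \<Rightarrow> real set" where
  "dyadic_cover n = (\<Union>w\<in>admissible_words n. {word_val w .. word_val w + 1 / 2 ^ n})"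

lemma closed_dyadic_cover: "closed (dyadic_cover n)"
  unfolding dyadic_cover_def by (rule closed_UN[OF finite_admissible_words]) auto

lemma closure_FixR_subset_dyadic_cover: "closure FixR \<subseteq> dyadic_cover n"
proof (rule closure_minimal[OF _ closed_dyadic_cover])
  show "FixR \<subseteq> dyadic_cover n"
  proof
    fix x assume "x \<in> FixR"
    then obtain b where "b \<in> fixed_words" "x = bin_val b"
      unfolding FixR_eq_bin_val_fixed_words by blast
    then show "x \<in> dyadic_cover n"
      using init_word_in_admissible_words[of b n] bin_val_init_word_bounds[of b n]
      unfolding dyadic_cover_def by auto
  qed
qed

lemma emeasure_dyadic_cover_le:
  "emeasure lborel (dyadic_cover n) \<le> ennreal (card (admissible_words n) / 2 ^ n)"
proof -
  have "emeasure lborel (dyadic_cover n)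
        \<le> (\<Sum>w\<in>admissible_words n. emeasure lborel {word_val w .. word_val w + 1 / 2 ^ n})"
    unfolding dyadic_cover_def
    by (rule emeasure_subadditive_finite[OF finite_admissible_words]) auto
  also have "\<dots> = (\<Sum>w\<in>admissible_words n. ennreal (1 / 2 ^ n))" by simp
  also have "\<dots> = ennreal (\<Sum>w\<in>admissible_words n. 1 / 2 ^ n)"
    by (rule sum_ennreal) simp
  also have "\<dots> = ennreal (card (admissible_words n) / 2 ^ n)" by simp
  finally show ?thesis .
qed

lemma closure_FixR_null: "closure FixR \<in> null_sets lborel"
proof
  have bound: "emeasure lborel (closure FixR) \<le> ennreal ((3/4) ^ k)" for k
  proof -
    have "emeasure lborel (closure FixR) \<le> emeasure lborel (dyadic_cover (2 * k))"
      by (rule emeasure_mono[OF closure_FixR_subset_dyadic_cover]) (simp add: closed_dyadic_cover)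
    also have "\<dots> \<le> ennreal (card (admissible_words (2 * k)) / 2 ^ (2 * k))"
      by (rule emeasure_dyadic_cover_le)
    also have "\<dots> \<le> ennreal ((3/4) ^ k)"
    proof (rule ennreal_leI)
      have "real (card (admissible_words (2 * k))) \<le> 3 ^ k"
        using card_admissible_words_even[of k] by (metis of_nat_le_iff of_nat_numeral of_nat_power)
      then show "card (admissible_words (2 * k)) / 2 ^ (2 * k) \<le> (3/4::real) ^ k"
        by (simp add: power_mult power_divide divide_right_mono)
    qed
    finally show ?thesis .
  qed
  have "emeasure lborel (closure FixR) \<le> 0 + ennreal e" if "0 < e" for e
  proof -
    obtain k where "(3/4::real) ^ k < e" using real_arch_pow_inv[OF \<open>0 < e\<close>] by force
    then show ?thesis using bound[of k] by (simp add: order_trans ennreal_leI)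
  qed
  then have "emeasure lborel (closure FixR) \<le> 0" by (rule ennreal_le_epsilon)
  then show "emeasure lborel (closure FixR) = 0" by simp
  show "closure FixR \<in> sets lborel" by simp
qed

section \<open>Topology of the closure of Fix R\<close>

text \<open>If x is not an endpoint of any interval of the dyadic cover, the expansion of x is
within less than 2^-n of an admissible word of length n, and therefore starts with it.\<close>

lemma init_word_in_admissible_words_if_not_dyadic:
  assumes "x \<in> dyadic_cover n" "\<And>k. x \<noteq> real_of_int k / 2 ^ n"
    and ones: "infinite {i. b i}" and val: "bin_val b = x"
  shows "init_word b n \<in> admissible_words n"
proof -
  obtain w where w: "w \<in> admissible_words n" "word_val w \<le> x" "x \<le> word_val w + 1 / 2 ^ n"
    using assms(1) by (auto simp: dyadic_cover_def)
  have len: "length w = n" using w by (simp add: admissible_words_def)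
  obtain k where k: "word_val w * 2 ^ n = real_of_int k"
    using word_val_scaled_in_Ints[of w] len by (auto elim: Ints_cases)
  have "x \<noteq> word_val w" "x \<noteq> word_val w + 1 / 2 ^ n"
    using assms(2)[of k] assms(2)[of "k + 1"] k by (auto simp: field_simps)
  moreover have "word_val (init_word b n) < x" "x \<le> word_val (init_word b n) + 1 / 2 ^ n"
    using word_val_init_word_less[OF ones] bin_val_init_word_bounds(2)[of b n] val by auto
  ultimately have "\<bar>word_val w - word_val (init_word b n)\<bar> < 1 / 2 ^ n"
    using w by (simp add: abs_less_iff)
  then have "w = init_word b n" using word_val_dist_ge[of w "init_word b n"] len by force
  with w show ?thesis by simp
qed

lemma closure_FixR_minus_FixR_subset_dyadic: "closure FixR - FixR \<subseteq> dyadic"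
proof
  fix x assume x: "x \<in> closure FixR - FixR"
  show "x \<in> dyadic"
  proof (rule ccontr)
    assume "x \<notin> dyadic"
    have "closure FixR \<subseteq> {0..1}" by (rule closure_minimal) (auto simp: FixR_def)
    with x have "0 \<le> x" "x \<le> 1" by auto
    with \<open>x \<notin> dyadic\<close> have not_dyadic: "x \<noteq> real_of_int k / 2 ^ n" for k n
      by (auto simp: dyadic_def)
    then have "0 < x" using \<open>0 \<le> x\<close> not_dyadic[of 0 0] by simp
    define b where "b = beta x"
    have ones: "infinite {i. b i}" and val: "bin_val b = x"
      using beta[OF \<open>0 < x\<close> \<open>x \<le> 1\<close>] by (simp_all add: b_def)
    have "admissible_at b n" for n
      using init_word_in_admissible_words_if_not_dyadic[OF _ not_dyadic ones val]
        x closure_FixR_subset_dyadic_cover[of "Suc n"]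
      by (auto simp: admissible_words_def admissible_word_init_word)
    then have "b \<in> fixed_words" using ones unfolding fixed_words_def admissible_def by blast
    with x val show False using bin_val_fixed_word_in_FixR by blast
  qed
qed

lemma FixR_islimpt: assumes "x \<in> FixR" shows "x islimpt FixR"
  unfolding islimpt_approachable
proof (intro allI impI)
  fix e :: real assume "0 < e"
  obtain b where b: "b \<in> fixed_words" "x = bin_val b"
    using assms FixR_eq_bin_val_fixed_words by auto
  obtain n where "(1/2::real) ^ n < e" using real_arch_pow_inv[OF \<open>0 < e\<close>] by force
  moreover have "1 / 2 ^ Suc n \<le> (1/2::real) ^ n" by (simp add: power_divide field_simps)
  ultimately have small: "1 / 2 ^ Suc n < e" by linarith
  let ?w = "init_word b (Suc n)"
  have "admissible_word ?w" "?w \<noteq> []"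
    using init_word_in_admissible_words[OF b(1)] by (auto simp: admissible_words_def)
  then obtain c c' where "c \<in> fixed_words" "c' \<in> fixed_words" "c \<noteq> c'"
    "init_word c (Suc n) = ?w" "init_word c' (Suc n) = ?w"
    by (rule two_fixed_words_extending) auto
  then obtain c where c: "c \<in> fixed_words" "c \<noteq> b" "init_word c (Suc n) = ?w" by blast
  have "bin_val c \<noteq> x"
    using bin_val_inj[of c b] c(1,2) b by (auto simp: fixed_words_def)
  moreover have "dist (bin_val c) x \<le> 1 / 2 ^ Suc n"
    using bin_val_init_word_bounds[of c "Suc n"] bin_val_init_word_bounds[of b "Suc n"] c(3) b(2)
    by (auto simp: dist_real_def abs_le_iff)
  moreover have "bin_val c \<in> FixR" using c(1) by (rule bin_val_fixed_word_in_FixR)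
  ultimately show "\<exists>x'\<in>FixR. x' \<noteq> x \<and> dist x' x < e" using small by force
qed

lemma islimpt_closure_if_perfect:
  assumes "\<And>x. x \<in> S \<Longrightarrow> x islimpt S" "x \<in> closure S"
  shows "x islimpt closure S"
proof -
  have "x \<in> S \<or> x islimpt S" using assms(2) by (simp add: closure_def)
  then have "x islimpt S" using assms(1) by blast
  then show ?thesis using closure_subset by (rule islimpt_subset)
qed

lemma closure_Diff_singleton_perfect:
  fixes S :: "'a::t1_space set"
  assumes perfect: "\<And>x. x \<in> S \<Longrightarrow> x islimpt S"
  shows "S \<subseteq> closure (S - {a})"
proof
  fix y assume "y \<in> S"
  show "y \<in> closure (S - {a})"
  proof (cases "y = a")
    case True
    have "y islimpt (S - {y})"
      using perfect[OF \<open>y \<in> S\<close>] by (subst islimpt_punctured[symmetric])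
    with True show ?thesis by (simp add: closure_def)
  next
    case False
    with \<open>y \<in> S\<close> show ?thesis using closure_subset[of "S - {a}"] by blast
  qed
qed

text \<open>Baire: a countable closed set is the countable union of its singletons, which
would all have to be nowhere dense in it.\<close>

lemma perfect_closed_uncountable:
  fixes S :: "'a::{real_normed_vector,heine_borel} set"
  assumes "closed S" "S \<noteq> {}" and perfect: "\<And>x. x \<in> S \<Longrightarrow> x islimpt S"
  shows "uncountable S"
proof
  assume "countable S"
  define \<G> where "\<G> = (\<lambda>a. S - {a}) ` S"
  have dense: "openin (top_of_set S) T \<and> S \<subseteq> closure T" if "T \<in> \<G>" for T
  proof -
    obtain a where "T = S - {a}" using \<open>T \<in> \<G>\<close> unfolding \<G>_def by blast
    moreover have "openin (top_of_set S) (S - {a})"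
      by (rule openin_delete) (rule openin_subtopology_self)
    ultimately show ?thesis using closure_Diff_singleton_perfect[OF perfect] by blast
  qed
  have "countable \<G>" unfolding \<G>_def using \<open>countable S\<close> by simp
  from Baire[OF \<open>closed S\<close> this dense] have "S \<subseteq> closure (\<Inter>\<G>)" .
  moreover have "\<Inter>\<G> = {}"
  proof -
    have "x \<notin> \<Inter>\<G>" if "x \<in> S" for x using that unfolding \<G>_def by blast
    moreover have "\<Inter>\<G> \<subseteq> S" using \<open>S \<noteq> {}\<close> unfolding \<G>_def by blast
    ultimately show ?thesis by blast
  qed
  ultimately show False using \<open>S \<noteq> {}\<close> by simp
qed

lemma connected_subset_null_real:
  fixes C S :: "real set"
  assumes "S \<in> null_sets lborel" "C \<subseteq> S" "connected C"
  shows "\<exists>a. C \<subseteq> {a}"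
proof (rule ccontr)
  assume "\<nexists>a. C \<subseteq> {a}"
  then obtain l u where "l \<in> C" "u \<in> C" "l < u"
    by (metis insertI1 linorder_neqE_linordered_idom subsetI singletonD)
  then have "{l..u} \<subseteq> S" using connected_contains_Icc[OF assms(3)] assms(2) by blast
  then have "emeasure lborel {l..u} \<le> emeasure lborel S"
    using assms(1) by (intro emeasure_mono) auto
  with null_setsD1[OF assms(1)] \<open>l < u\<close> show False by simp
qed

lemma countable_dyadic: "countable dyadic"
proof (rule countable_subset)
  show "dyadic \<subseteq> (\<lambda>(k, n). real_of_int k / 2 ^ n) ` (UNIV :: (int \<times> nat) set)"
    by (auto simp: dyadic_def)
qed simp

lemma closure_FixR_perfect: "x \<in> closure FixR \<Longrightarrow> x islimpt closure FixR"
  using islimpt_closure_if_perfect[OF FixR_islimpt] .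

lemma closure_FixR_nonempty: "closure FixR \<noteq> {}"
  unfolding closure_eq_empty FixR_eq_bin_val_fixed_words using fixed_words_nonempty by simp

lemma uncountable_FixR: "uncountable FixR"
proof
  assume "countable FixR"
  then have "countable (FixR \<union> dyadic)" using countable_dyadic by simp
  moreover have "closure FixR \<subseteq> FixR \<union> dyadic"
    using closure_FixR_minus_FixR_subset_dyadic by blast
  ultimately have "countable (closure FixR)" by (rule countable_subset[rotated])
  with perfect_closed_uncountable[OF closed_closure closure_FixR_nonempty closure_FixR_perfect]
  show False by simp
qed

lemma cantor_set_closure_FixR: "cantor_set (closure FixR)"
  unfolding cantor_set_def
proof (intro conjI ballI allI impI)
  show "compact (closure FixR)"
    by (rule compact_closure[THEN iffD2], rule bounded_subset[of "{0..1}"]) (auto simp: FixR_def)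
  show "\<exists>a. C \<subseteq> {a}" if "C \<subseteq> closure FixR" "connected C" for C
    using connected_subset_null_real[OF closure_FixR_null that] .
qed (use closure_FixR_nonempty closure_FixR_perfect in auto)

theorem proposition6p6:
  shows "uncountable FixR \<and> FixR \<subseteq> {0..1} - dyadic
    \<and> cantor_set (closure FixR) \<and> closure FixR \<in> null_sets lborel
    \<and> closure FixR - FixR \<subseteq> dyadic"
proof (intro conjI)
  show "FixR \<subseteq> {0..1} - dyadic"
    using FixR_disjoint_dyadic by (auto simp: FixR_def)
qed (fact uncountable_FixR cantor_set_closure_FixR closure_FixR_null
      closure_FixR_minus_FixR_subset_dyadic)+

end
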